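(* Let $(P_n(x))_{n\ge0}$ be a sequence of polynomials such that $\sum_{n\ge0}P_n(x)\frac{t^n}{n!}=f(t)e^{xt}$ for some $f$ holomorphic at $0$ with $f(0)\neq0$, and such that $P_n(1-x)=(-1)^nP_n(x)$ for all $n\ge0$. Let $N$ be a positive integer. If the function $F(t)=f(t)-\sum_{k=0}^{N}B_k(0)\frac{t^k}{k!}$ is even, then $P_n(x)=B_n(x)$ for all $n\ge0$ and $f(t)=\frac{t}{e^t-1}$.
   Context: $B_n(x)$ denotes the Bernoulli polynomials, defined by $\sum_{n\ge0}B_n(x)\frac{t^n}{n!}=\frac{te^{xt}}{e^t-1}$; $B_k(0)$ are the Bernoulli numbers. *)

theory Defs
  imports "HOL-Complex_Analysis.Complex_Analysis"
          "HOL-Computational_Algebra.Polynomial"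
          "HOL-Computational_Algebra.Formal_Power_Series"
begin

definition bernpoly :: "nat \<Rightarrow> complex \<Rightarrow> complex" where
  "bernpoly n x = fact n * fps_nth (fps_X * fps_exp x / (fps_exp 1 - 1)) n"

end

theory Submission
  imports Defs
begin

text \<open>The reflection \<open>P\<^sub>n(1 - x) = (-1)\<^sup>n P\<^sub>n(x)\<close> turns the generating function into the
  functional equation \<open>f(-t) = f(t) e\<^sup>t\<close>. The Bernoulli numbers satisfy \<open>b(-t) = b(t) + t\<close>
  for \<open>b(t) = t/(e\<^sup>t - 1)\<close>, so their Taylor polynomial of degree \<open>N \<ge> 1\<close> has odd part
  \<open>-t/2\<close>; evenness of \<open>F\<close> therefore gives \<open>f(-t) - f(t) = t\<close>. Together, \<open>f(t)(e\<^sup>t - 1) = t\<close>,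
  which pins down \<open>f\<close> and, comparing power series coefficients, every \<open>P\<^sub>n\<close>.\<close>

definition bernoulli_egf :: "complex fps" where
  "bernoulli_egf = fps_X / (fps_exp 1 - 1)"

lemma fps_exp_one_minus_one_nonzero: "fps_exp (1::complex) - 1 \<noteq> 0"
proof
  assume "fps_exp (1::complex) - 1 = 0"
  hence "(fps_exp (1::complex) - 1) $ 1 = 0" by simp
  thus False by simp
qed

lemma subdegree_fps_exp_one_minus_one_le: "subdegree (fps_exp (1::complex) - 1) \<le> 1"
  by (intro subdegree_leI) simp

lemma fps_exp_one_minus_one_times_bernoulli_egf: "(fps_exp 1 - 1) * bernoulli_egf = fps_X"
  using fps_times_divide_eq[OF fps_exp_one_minus_one_nonzero] subdegree_fps_exp_one_minus_one_le
  by (simp add: bernoulli_egf_def mult.commute)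

lemma bernpoly_conv_bernoulli_egf: "bernpoly n x = fact n * (fps_exp x * bernoulli_egf) $ n"
  using fps_divide_times2[of "fps_exp 1 - 1" fps_X "fps_exp x"] subdegree_fps_exp_one_minus_one_le
  by (simp add: bernpoly_def bernoulli_egf_def mult.commute)

lemma bernoulli_egf_compose_uminus: "bernoulli_egf oo - fps_X = bernoulli_egf + fps_X"
proof -
  let ?E = "fps_exp (1::complex)" and ?b = bernoulli_egf
  have "(fps_exp (-1) - 1) * (?b oo - fps_X) = - fps_X"
    using fps_compose_mult_distrib[of "- fps_X" "?E - 1" ?b]
    by (simp add: fps_exp_one_minus_one_times_bernoulli_egf fps_compose_sub_distrib)
  hence "?E * ((fps_exp (-1) - 1) * (?b oo - fps_X)) = - (?E * fps_X)"
    by simp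
  moreover have "?E * fps_exp (-1) = 1"
    using fps_exp_add_mult[of "1::complex" "-1"] by simp
  ultimately have "(?E - 1) * (?b oo - fps_X) = ?E * fps_X"
    by (simp add: algebra_simps mult.assoc[symmetric])
  also have "\<dots> = (?E - 1) * ?b + (?E - 1) * fps_X"
    unfolding fps_exp_one_minus_one_times_bernoulli_egf by (simp add: algebra_simps)
  also have "\<dots> = (?E - 1) * (?b + fps_X)"
    by (rule distrib_left[symmetric])
  finally show ?thesis
    using fps_exp_one_minus_one_nonzero by simp
qed

lemma bernpoly_0_reflect: "(-1) ^ k * bernpoly k 0 = bernpoly k 0 + (if k = 1 then 1 else 0)"
proof -
  have "(bernoulli_egf oo - fps_X) $ k = (bernoulli_egf + fps_X) $ k"
    by (simp only: bernoulli_egf_compose_uminus)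
  hence "(-1) ^ k * bernoulli_egf $ k = bernoulli_egf $ k + (if k = 1 then 1 else 0)"
    by (simp add: fps_compose_uminus')
  thus ?thesis
    by (simp add: bernpoly_conv_bernoulli_egf algebra_simps)
qed

lemma sum_bernpoly_0_uminus_diff:
  assumes "N > 0"
  shows "(\<Sum>k\<le>N. bernpoly k 0 * (- t) ^ k / fact k) - (\<Sum>k\<le>N. bernpoly k 0 * t ^ k / fact k) = t"
proof -
  have "(\<Sum>k\<le>N. bernpoly k 0 * (- t) ^ k / fact k) - (\<Sum>k\<le>N. bernpoly k 0 * t ^ k / fact k)
      = (\<Sum>k\<le>N. bernpoly k 0 * (- t) ^ k / fact k - bernpoly k 0 * t ^ k / fact k)"
    by (rule sum_subtractf[symmetric])
  also have "\<dots> = (\<Sum>k\<le>N. if k = 1 then t else 0)"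
  proof (rule sum.cong[OF refl])
    fix k
    have "bernpoly k 0 * (- t) ^ k = ((-1) ^ k * bernpoly k 0) * t ^ k"
      by (subst power_minus) (simp add: mult_ac)
    hence "bernpoly k 0 * (- t) ^ k = (bernpoly k 0 + (if k = 1 then 1 else 0)) * t ^ k"
      by (simp only: bernpoly_0_reflect)
    thus "bernpoly k 0 * (- t) ^ k / fact k - bernpoly k 0 * t ^ k / fact k = (if k = 1 then t else 0)"
      by (simp add: distrib_right diff_divide_distrib[symmetric])
  qed
  also have "\<dots> = t"
    using assms by (simp add: sum.delta)
  finally show ?thesis .
qed

lemma has_fps_expansion_of_sums:
  fixes g :: "'a :: {banach, real_normed_field} \<Rightarrow> 'a"
  assumes "\<forall>\<^sub>F t in nhds 0. (\<lambda>n. c n * t ^ n) sums g t"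
  shows "g has_fps_expansion Abs_fps c"
proof -
  obtain e where e: "e > 0" and sums: "\<And>t. dist t 0 < e \<Longrightarrow> (\<lambda>n. c n * t ^ n) sums g t"
    using assms unfolding eventually_nhds_metric by blast
  have "summable (\<lambda>n. c n * of_real (e / 2) ^ n)"
    using sums[of "of_real (e / 2)"] e by (auto simp: sums_iff)
  hence "ereal (e / 2) \<le> conv_radius c"
    using conv_radius_geI e by fastforce
  moreover have "ereal 0 < ereal (e / 2)"
    using e by simp
  ultimately have "0 < conv_radius c"
    unfolding zero_ereal_def by (rule order_less_le_trans[rotated])
  hence "fps_conv_radius (Abs_fps c) > 0"
    by (simp add: fps_conv_radius_def)
  moreover have "\<forall>\<^sub>F t in nhds 0. eval_fps (Abs_fps c) t = g t"
    using assms by eventually_elim (simp add: eval_fps_def sums_iff)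
  ultimately show ?thesis
    by (simp add: has_fps_expansion_def)
qed

lemma egf_reflection_imp_exp_functional_eq:
  fixes P :: "nat \<Rightarrow> complex poly" and f :: "complex \<Rightarrow> complex"
  assumes gen: "\<And>x. \<forall>\<^sub>F t in nhds 0.
                 (\<lambda>n. poly (P n) x * t ^ n / fact n) sums (f t * exp (x * t))"
    and sym: "\<And>n x. poly (P n) (1 - x) = (-1) ^ n * poly (P n) x"
  shows "\<forall>\<^sub>F t in nhds 0. f (- t) = f t * exp t"
proof -
  have reflect: "(\<lambda>n. poly (P n) 0 * (- t) ^ n / fact n) = (\<lambda>n. poly (P n) 1 * t ^ n / fact n)"
    for t
    using sym[of _ 0] by (simp add: power_minus[of t] mult_ac)
  have "((\<lambda>t::complex. - t) \<longlongrightarrow> - 0) (nhds 0)"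
    by (rule tendsto_minus[OF filterlim_ident])
  hence "\<forall>\<^sub>F t in nhds 0. (\<lambda>n. poly (P n) 0 * (- t) ^ n / fact n) sums f (- t)"
    using eventually_compose_filterlim[OF gen[of 0]] by simp
  then show ?thesis
    using gen[of 1]
  proof eventually_elim
    case (elim t)
    show ?case
      using sums_unique2[OF elim(1)[unfolded reflect] elim(2)] by simp
  qed
qed

lemma eventually_eq_t_div_exp_minus_one:
  fixes f :: "complex \<Rightarrow> complex"
  assumes "isCont f 0" and eq: "\<forall>\<^sub>F t in nhds 0. f t * (exp t - 1) = t"
  shows "\<forall>\<^sub>F t in nhds 0. f t = (if t = 0 then 1 else t / (exp t - 1))"
proof -
  have "((\<lambda>t. (exp t - exp 0) / (t - 0)) \<longlongrightarrow> exp (0::complex)) (at 0)"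
    using DERIV_exp[of 0] by (simp only: has_field_derivative_iff)
  from tendsto_mult[OF assms(1)[unfolded isCont_def] this]
  have "((\<lambda>t. f t * ((exp t - 1) / t)) \<longlongrightarrow> f 0) (at 0)"
    by simp
  moreover have "\<forall>\<^sub>F t in at 0. f t * ((exp t - 1) / t) = 1"
    using eq unfolding eventually_at_filter by eventually_elim auto
  hence "((\<lambda>t. f t * ((exp t - 1) / t)) \<longlongrightarrow> 1) (at 0)"
    by (rule tendsto_eventually)
  ultimately have f0: "f 0 = 1"
    by (rule tendsto_unique[OF at_neq_bot])
  from eq show ?thesis
  proof eventually_elim
    case (elim t)
    show ?case
    proof (cases "t = 0")
      case False
      with elim have "exp t - 1 \<noteq> 0" by auto
      with elim False show ?thesis by (simp add: eq_divide_eq)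
    qed (simp add: f0)
  qed
qed

lemma coeffs_eq_bernpoly:
  fixes f :: "complex \<Rightarrow> complex"
  assumes gen: "\<forall>\<^sub>F t in nhds 0. (\<lambda>n. a n * t ^ n / fact n) sums (f t * exp (x * t))"
    and eq: "\<forall>\<^sub>F t in nhds 0. f t * (exp t - 1) = t"
  shows "a n = bernpoly n x"
proof -
  define G where "G = Abs_fps (\<lambda>n. a n / fact n)"
  have "(\<lambda>t. f t * exp (x * t)) has_fps_expansion G"
    unfolding G_def using gen by (intro has_fps_expansion_of_sums) simp
  hence "(\<lambda>t. (exp t - 1) * (f t * exp (x * t))) has_fps_expansion (fps_exp 1 - 1) * G"
    by (intro fps_expansion_intros)
  moreover have "\<forall>\<^sub>F t in nhds 0. (exp t - 1) * (f t * exp (x * t)) = t * exp (x * t)"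
    using eq by eventually_elim (simp add: mult_ac)
  ultimately have "(\<lambda>t. t * exp (x * t)) has_fps_expansion (fps_exp 1 - 1) * G"
    by (simp add: has_fps_expansion_cong)
  moreover have "(\<lambda>t. t * exp (x * t)) has_fps_expansion fps_X * fps_exp x"
    by (intro fps_expansion_intros)
  ultimately have "(fps_exp 1 - 1) * G = fps_X * fps_exp x"
    by (rule fps_expansion_unique_complex)
  also have "\<dots> = (fps_exp 1 - 1) * (fps_exp x * bernoulli_egf)"
    by (simp only: fps_exp_one_minus_one_times_bernoulli_egf[symmetric] mult_ac)
  finally have "G = fps_exp x * bernoulli_egf"
    by (simp only: mult_left_cancel[OF fps_exp_one_minus_one_nonzero])
  have "a n / fact n = G $ n"
    by (simp add: G_def)
  also note \<open>G = fps_exp x * bernoulli_egf\<close>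
  finally show ?thesis
    by (simp add: bernpoly_conv_bernoulli_egf field_simps)
qed

theorem mainTheorem5:
  fixes P :: "nat \<Rightarrow> complex poly" and f :: "complex \<Rightarrow> complex" and N :: nat
  assumes f_hol: "f analytic_on {0}"
    and f0: "f 0 \<noteq> 0"
    and gen: "\<And>x. \<forall>\<^sub>F t in nhds 0.
                 (\<lambda>n. poly (P n) x * t ^ n / fact n) sums (f t * exp (x * t))"
    and sym: "\<And>n x. poly (P n) (1 - x) = (-1) ^ n * poly (P n) x"
    and N_pos: "N > 0"
    and F_even: "\<forall>\<^sub>F t in nhds 0.
                   f (- t) - (\<Sum>k\<le>N. bernpoly k 0 * (- t) ^ k / fact k)
                 = f t - (\<Sum>k\<le>N. bernpoly k 0 * t ^ k / fact k)"
  shows "(\<forall>n x. poly (P n) x = bernpoly n x)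
       \<and> (\<forall>\<^sub>F t in nhds 0. f t = (if t = 0 then 1 else t / (exp t - 1)))"
proof -
  have "\<forall>\<^sub>F t in nhds 0. f t * (exp t - 1) = t"
    using egf_reflection_imp_exp_functional_eq[OF gen sym] F_even
  proof eventually_elim
    case (elim t)
    thus ?case
      using sum_bernpoly_0_uminus_diff[OF N_pos, of t] by (simp add: algebra_simps)
  qed
  thus ?thesis
    using coeffs_eq_bernpoly[OF gen]
      eventually_eq_t_div_exp_minus_one[OF analytic_at_imp_isCont[OF f_hol]]
    by blast
qed

end
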